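(* Let $\mathcal{H}=(\mathcal{V},\mathcal{E})$ be a connected hypergraph and let $B(\mathcal{H})$ be its set of bridges. If $B(\mathcal{H})$ is a proper subset of $\mathcal{E}$ and the spanning sub-hypergraph $(\mathcal{V},B(\mathcal{H}))$ is connected, then $\lambda^2$ divides $P(\mathcal{H},\lambda)$.
   Context: A hypergraph $\mathcal{H}=(\mathcal{V},\mathcal{E})$ consists of a finite vertex set $\mathcal{V}$ and a set $\mathcal{E}$ of subsets of $\mathcal{V}$, each of size at least $1$, called edges. For a positive integer $\lambda$, a weak proper $\lambda$-colouring of $\mathcal{H}$ is a map $\phi:\mathcal{V}\to\{1,\dots,\lambda\}$ such that $|\{\phi(v):v\in e\}|>1$ for every $e\in\mathcal{E}$. $P(\mathcal{H},\lambda)$ denotes the number of weak proper $\lambda$-colourings of $\mathcal{H}$; it is a polynomial in $\lambda$. $\mathcal{H}$ is connected if for any two vertices $v_1,v_2$ there is a sequence of edges $e_0,\dots,e_k$ with $v_1\in e_0$, $v_2\in e_k$ and $e_i\cap e_{i+1}\neq\emptyset$ for all $i$. An edge $e$ of a connected hypergraph is a bridge if $\mathcal{H}-e$ (obtained by removing the edge $e$, keeping all vertices) is disconnected. *)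

theory Defs
  imports "HOL-Library.FuncSet" "HOL-Computational_Algebra.Polynomial"
begin

definition hypergraph :: "'a set \<Rightarrow> 'a set set \<Rightarrow> bool" where
  "hypergraph V E \<longleftrightarrow> finite V \<and> (\<forall>e\<in>E. e \<subseteq> V \<and> e \<noteq> {})"

definition hconnected :: "'a set \<Rightarrow> 'a set set \<Rightarrow> bool" where
  "hconnected V E \<longleftrightarrow>
     (\<forall>v1\<in>V. \<forall>v2\<in>V. \<exists>es. es \<noteq> [] \<and> set es \<subseteq> E \<and> v1 \<in> hd es \<and> v2 \<in> last es \<and>
        (\<forall>i. Suc i < length es \<longrightarrow> es ! i \<inter> es ! Suc i \<noteq> {}))"

definition bridges :: "'a set \<Rightarrow> 'a set set \<Rightarrow> 'a set set" where
  "bridges V E = {e \<in> E. \<not> hconnected V (E - {e})}"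

definition weak_colourings :: "'a set \<Rightarrow> 'a set set \<Rightarrow> nat \<Rightarrow> ('a \<Rightarrow> nat) set" where
  "weak_colourings V E n = {\<phi> \<in> V \<rightarrow>\<^sub>E {1..n}. \<forall>e\<in>E. card (\<phi> ` e) > 1}"

definition num_colourings :: "'a set \<Rightarrow> 'a set set \<Rightarrow> nat \<Rightarrow> nat" where
  "num_colourings V E n = card (weak_colourings V E n)"

definition chrom_poly :: "'a set \<Rightarrow> 'a set set \<Rightarrow> int poly" where
  "chrom_poly V E = (THE p. \<forall>n\<ge>1. poly p (int n) = int (num_colourings V E n))"

end

theory Submission
  imports Defs
begin

text \<open>
  By inclusion-exclusion over the set S of edges forced to be monochromatic,
  P(H, \<lambda>) = \<Sum>S\<subseteq>E (-1)^|S| \<lambda>^c(S), where c(S) is the number of connected components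
  of the spanning sub-hypergraph (V, S). Since c(S) \<ge> 1, the constant term vanishes.
  A spanning S with c(S) = 1 must contain every bridge b, for otherwise S \<subseteq> E - {b}
  would make H - b connected; conversely, S \<supseteq> B(H) gives c(S) = 1 because (V, B(H))
  is connected. So the coefficient of \<lambda> is the alternating sum of (-1)^|S| over the
  nontrivial interval B(H) \<subseteq> S \<subseteq> E, which is zero.
\<close>

lemma successively_iff_nth:
  "successively P xs \<longleftrightarrow> (\<forall>i. Suc i < length xs \<longrightarrow> P (xs ! i) (xs ! Suc i))"
proof (induction P xs rule: successively.induct)
  case (3 P x y xs)
  then show ?case by (auto simp: nth_Cons split: nat.splits)
qed auto

definition hadj :: "'a set set \<Rightarrow> 'a rel" where
  "hadj S = {(u, v). \<exists>e\<in>S. u \<in> e \<and> v \<in> e}"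

lemma sym_hadj: "sym (hadj S)"
  by (auto simp: sym_def hadj_def)

lemma hadj_mono: "S \<subseteq> T \<Longrightarrow> hadj S \<subseteq> hadj T"
  by (auto simp: hadj_def)

lemma edge_walk_imp_trancl_hadj:
  assumes "es \<noteq> []" "set es \<subseteq> S" "u \<in> hd es" "v \<in> last es"
    and "successively (\<lambda>e e'. e \<inter> e' \<noteq> {}) es"
  shows "(u, v) \<in> (hadj S)\<^sup>+"
  using assms
proof (induction es arbitrary: u)
  case (Cons e es)
  show ?case
  proof (cases es)
    case Nil
    then show ?thesis using Cons.prems by (auto simp: hadj_def)
  next
    case (Cons e' es')
    then obtain w where "w \<in> e" "w \<in> hd es"
      using Cons.prems(5) by auto
    then have "(u, w) \<in> hadj S" "(w, v) \<in> (hadj S)\<^sup>+"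
      using Cons.prems Cons.IH[of w] \<open>es = e' # es'\<close> by (auto simp: hadj_def)
    then show ?thesis by (rule trancl_into_trancl2)
  qed
qed simp

lemma trancl_hadj_imp_edge_walk:
  assumes "(u, v) \<in> (hadj S)\<^sup>+"
  shows "\<exists>es. es \<noteq> [] \<and> set es \<subseteq> S \<and> u \<in> hd es \<and> v \<in> last es \<and>
    successively (\<lambda>e e'. e \<inter> e' \<noteq> {}) es"
  using assms
proof (induction rule: trancl_induct)
  case (base v)
  then obtain e where "e \<in> S" "u \<in> e" "v \<in> e" by (auto simp: hadj_def)
  then show ?case by (intro exI[of _ "[e]"]) auto
next
  case (step v w)
  then obtain es where es: "es \<noteq> []" "set es \<subseteq> S" "u \<in> hd es" "v \<in> last es"
    "successively (\<lambda>e e'. e \<inter> e' \<noteq> {}) es" by blast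
  obtain e where "e \<in> S" "v \<in> e" "w \<in> e" using step.hyps(2) by (auto simp: hadj_def)
  with es show ?case
    by (intro exI[of _ "es @ [e]"]) (auto simp: successively_append_iff)
qed

lemma edge_walk_iff_trancl_hadj:
  "(\<exists>es. es \<noteq> [] \<and> set es \<subseteq> S \<and> u \<in> hd es \<and> v \<in> last es \<and>
      (\<forall>i. Suc i < length es \<longrightarrow> es ! i \<inter> es ! Suc i \<noteq> {})) \<longleftrightarrow>
    (u, v) \<in> (hadj S)\<^sup>+"
  unfolding successively_iff_nth[where P = "\<lambda>e e'. e \<inter> e' \<noteq> {}", symmetric]
  using edge_walk_imp_trancl_hadj trancl_hadj_imp_edge_walk by metis

lemma hconnected_iff_trancl:
  "hconnected V S \<longleftrightarrow> (\<forall>u\<in>V. \<forall>v\<in>V. (u, v) \<in> (hadj S)\<^sup>+)"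
  by (simp add: hconnected_def edge_walk_iff_trancl_hadj)

lemma hconnected_iff_rtrancl:
  "hconnected V S \<longleftrightarrow> V \<subseteq> \<Union>S \<and> (\<forall>u\<in>V. \<forall>v\<in>V. (u, v) \<in> (hadj S)\<^sup>*)"
  unfolding hconnected_iff_trancl
proof safe
  fix u assume "\<forall>u\<in>V. \<forall>v\<in>V. (u, v) \<in> (hadj S)\<^sup>+" "u \<in> V"
  then obtain w where "(u, w) \<in> hadj S" by (meson tranclD)
  then show "u \<in> \<Union>S" by (auto simp: hadj_def)
next
  fix u v assume "V \<subseteq> \<Union>S" "\<forall>u\<in>V. \<forall>v\<in>V. (u, v) \<in> (hadj S)\<^sup>*" "u \<in> V" "v \<in> V"
  then show "(u, v) \<in> (hadj S)\<^sup>+"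
  proof (cases "u = v")
    case True
    obtain e where "e \<in> S" "u \<in> e" using \<open>V \<subseteq> \<Union>S\<close> \<open>u \<in> V\<close> by blast
    then have "(u, u) \<in> hadj S" by (auto simp: hadj_def)
    then show ?thesis using True by blast
  qed (auto dest: rtranclD)
qed (meson trancl_into_rtrancl)

definition hcomponents :: "'a set \<Rightarrow> 'a set set \<Rightarrow> 'a set set" where
  "hcomponents V S = V // Restr ((hadj S)\<^sup>*) V"

lemma equiv_Restr_rtrancl: "sym r \<Longrightarrow> equiv A (Restr (r\<^sup>*) A)"
  using sym_rtrancl[of r] by (auto simp: equiv_def refl_on_def sym_def trans_def)

lemma card_hcomponents_eq_1_iff:
  assumes "V \<noteq> {}"
  shows "card (hcomponents V S) = 1 \<longleftrightarrow> (\<forall>u\<in>V. \<forall>v\<in>V. (u, v) \<in> (hadj S)\<^sup>*)"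
proof
  assume "card (hcomponents V S) = 1"
  then obtain X where X: "hcomponents V S = {X}" by (auto simp: card_1_singleton_iff)
  have "equiv V (Restr ((hadj S)\<^sup>*) V)" by (rule equiv_Restr_rtrancl[OF sym_hadj])
  then have "X = V" using Union_quotient X by (fastforce simp: hcomponents_def)
  then show "\<forall>u\<in>V. \<forall>v\<in>V. (u, v) \<in> (hadj S)\<^sup>*"
    using X in_quotient_imp_in_rel[OF \<open>equiv V _\<close>] by (auto simp: hcomponents_def)
next
  assume "\<forall>u\<in>V. \<forall>v\<in>V. (u, v) \<in> (hadj S)\<^sup>*"
  then have "hcomponents V S = {V}"
    using assms by (auto simp: hcomponents_def quotient_def)
  then show "card (hcomponents V S) = 1" by simp
qed

lemma card_hcomponents_pos:
  "finite V \<Longrightarrow> V \<noteq> {} \<Longrightarrow> card (hcomponents V S) > 0"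
  by (simp add: hcomponents_def card_gt_0_iff finite_quotient equiv_Restr_rtrancl sym_hadj)

lemma card_PiE_respecting:
  assumes "equiv A R" "finite A"
  shows "card {f \<in> A \<rightarrow>\<^sub>E B. \<forall>(x, y)\<in>R. f x = f y} = card B ^ card (A // R)"
proof -
  define lift where "lift g = (\<lambda>x\<in>A. g (R `` {x}))" for g :: "'a set \<Rightarrow> 'b"
  define pick where "pick f = (\<lambda>X\<in>A // R. f (SOME x. x \<in> X))" for f :: "'a \<Rightarrow> 'b"
  have rep: "(SOME x. x \<in> X) \<in> A \<and> R `` {SOME x. x \<in> X} = X" if "X \<in> A // R" for X
    using assms(1) that by (metis equiv_Eps_preserves proj_Eps proj_def)
  have "bij_betw lift (A // R \<rightarrow>\<^sub>E B) {f \<in> A \<rightarrow>\<^sub>E B. \<forall>(x, y)\<in>R. f x = f y}"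
  proof (rule bij_betw_byWitness[where f' = pick])
    show "\<forall>g\<in>A // R \<rightarrow>\<^sub>E B. pick (lift g) = g"
    proof
      fix g assume "g \<in> A // R \<rightarrow>\<^sub>E B"
      have "pick (lift g) = restrict g (A // R)"
        unfolding pick_def by (rule restrict_ext) (simp add: lift_def rep)
      then show "pick (lift g) = g" using \<open>g \<in> _\<close> by simp
    qed
    show "\<forall>f\<in>{f \<in> A \<rightarrow>\<^sub>E B. \<forall>(x, y)\<in>R. f x = f y}. lift (pick f) = f"
    proof clarify
      fix f assume f: "f \<in> A \<rightarrow>\<^sub>E B" "\<forall>(x, y)\<in>R. f x = f y"
      have "lift (pick f) = restrict f A"
        unfolding lift_def
      proof (rule restrict_ext)
        fix x assume "x \<in> A"
        then have "(SOME y. y \<in> R `` {x}) \<in> R `` {x}"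
          using assms(1) by (metis equiv_class_self someI)
        then show "pick f (R `` {x}) = f x" using f(2) \<open>x \<in> A\<close> by (auto simp: pick_def quotientI)
      qed
      then show "lift (pick f) = f" using f(1) by simp
    qed
    show "lift ` (A // R \<rightarrow>\<^sub>E B) \<subseteq> {f \<in> A \<rightarrow>\<^sub>E B. \<forall>(x, y)\<in>R. f x = f y}"
      using assms(1) equiv_type[OF assms(1)] by (auto simp: lift_def quotientI equiv_class_eq)
    show "pick ` {f \<in> A \<rightarrow>\<^sub>E B. \<forall>(x, y)\<in>R. f x = f y} \<subseteq> A // R \<rightarrow>\<^sub>E B"
      using rep by (auto simp: pick_def)
  qed
  then show ?thesis
    using assms equiv_type[OF assms(1)]
    by (simp add: bij_betw_same_card[symmetric] card_PiE finite_quotient)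
qed

lemma rtrancl_preserves_eq:
  assumes "\<forall>(x, y)\<in>r. f x = f y" "(x, y) \<in> r\<^sup>*"
  shows "f x = f y"
  using assms(2) by (induction rule: rtrancl_induct) (use assms(1) in auto)

lemma card_monochromatic_edges:
  assumes "finite V" "\<Union>S \<subseteq> V"
  shows "card {\<phi> \<in> V \<rightarrow>\<^sub>E B. \<forall>e\<in>S. card (\<phi> ` e) \<le> 1} = card B ^ card (hcomponents V S)"
proof -
  have "(\<forall>e\<in>S. card (\<phi> ` e) \<le> 1) \<longleftrightarrow> (\<forall>(u, v)\<in>Restr ((hadj S)\<^sup>*) V. \<phi> u = \<phi> v)" for \<phi> :: "'a \<Rightarrow> 'b"
  proof -
    have "finite e" if "e \<in> S" for e
      by (rule finite_subset[OF _ assms(1)]) (use that assms(2) in blast)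
    then have "(\<forall>e\<in>S. card (\<phi> ` e) \<le> 1) \<longleftrightarrow> (\<forall>(u, v)\<in>hadj S. \<phi> u = \<phi> v)"
      by (auto simp: hadj_def card_le_Suc0_iff_eq)
    moreover have "hadj S \<subseteq> Restr ((hadj S)\<^sup>*) V"
      using assms(2) by (auto simp: hadj_def)
    ultimately show ?thesis
      using rtrancl_preserves_eq[of "hadj S" \<phi>] by blast
  qed
  then show ?thesis
    using card_PiE_respecting[OF equiv_Restr_rtrancl[OF sym_hadj] assms(1)]
    by (simp add: hcomponents_def)
qed

lemma int_card_Diff_UN:
  fixes A :: "'i \<Rightarrow> 'a set"
  assumes "finite U" "finite I"
  shows "int (card (U - (\<Union>i\<in>I. A i))) =
    (\<Sum>J\<in>Pow I. (-1) ^ card J * int (card (U \<inter> (\<Inter>i\<in>J. A i))))"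
proof -
  have additive: "int (card (U \<inter> (X \<union> Y))) = int (card (U \<inter> X)) + int (card (U \<inter> Y))"
    if "disjnt X Y" for X Y
    using that assms(1) by (simp add: Int_Un_distrib card_Un_disjoint disjnt_def inf_commute inf_left_commute)
  have "int (card (U \<inter> (\<Union>i\<in>I. A i))) =
      (\<Sum>J | J \<subseteq> I \<and> J \<noteq> {}. (-1) ^ (card J + 1) * int (card (U \<inter> (\<Inter>i\<in>J. A i))))"
    by (rule Incl_Excl_UN[of "\<lambda>X. int (card (U \<inter> X))"]) (fact additive, fact assms(2))
  moreover have "Pow I = insert {} {J. J \<subseteq> I \<and> J \<noteq> {}}" by auto
  moreover have "card (U - (\<Union>i\<in>I. A i)) = card U - card (U \<inter> (\<Union>i\<in>I. A i))"
    using assms(1) by (simp add: card_Diff_subset_Int)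
  ultimately show ?thesis
    using assms by (simp add: card_mono sum_negf)
qed

lemma hypergraph_finite_edges: "hypergraph V E \<Longrightarrow> finite E"
  using finite_subset[of E "Pow V"] by (auto simp: hypergraph_def)

lemma int_num_colourings_eq:
  assumes "hypergraph V E"
  shows "int (num_colourings V E n) =
    (\<Sum>S\<in>Pow E. (-1) ^ card S * int n ^ card (hcomponents V S))"
proof -
  define A where "A e = {\<phi> :: 'a \<Rightarrow> nat. card (\<phi> ` e) \<le> 1}" for e :: "'a set"
  have "finite V" "\<forall>e\<in>E. e \<subseteq> V" "finite E"
    using assms hypergraph_finite_edges by (auto simp: hypergraph_def)
  have "weak_colourings V E n = (V \<rightarrow>\<^sub>E {1..n}) - (\<Union>e\<in>E. A e)"
    by (auto simp: weak_colourings_def A_def)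
  then have "int (num_colourings V E n) =
      (\<Sum>S\<in>Pow E. (-1) ^ card S * int (card ((V \<rightarrow>\<^sub>E {1..n}) \<inter> (\<Inter>e\<in>S. A e))))"
    using int_card_Diff_UN[of "V \<rightarrow>\<^sub>E {1..n}" E A] \<open>finite V\<close> \<open>finite E\<close>
    by (simp add: num_colourings_def finite_PiE)
  also have "\<dots> = (\<Sum>S\<in>Pow E. (-1) ^ card S * int n ^ card (hcomponents V S))"
  proof (rule sum.cong)
    fix S assume "S \<in> Pow E"
    then have "card ((V \<rightarrow>\<^sub>E {1..n}) \<inter> (\<Inter>e\<in>S. A e)) = n ^ card (hcomponents V S)"
      using card_monochromatic_edges[of V S "{1..n}"] \<open>finite V\<close> \<open>\<forall>e\<in>E. e \<subseteq> V\<close>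
      by (auto simp: A_def Int_def)
    then show "(-1) ^ card S * int (card ((V \<rightarrow>\<^sub>E {1..n}) \<inter> (\<Inter>e\<in>S. A e))) =
        (-1) ^ card S * int n ^ card (hcomponents V S)" by simp
  qed simp
  finally show ?thesis .
qed

lemma poly_eqI_of_nat:
  fixes p q :: "'a::{idom, ring_char_0} poly"
  assumes "\<And>n. n \<ge> 1 \<Longrightarrow> poly p (of_nat n) = poly q (of_nat n)"
  shows "p = q"
proof (rule ccontr)
  assume "p \<noteq> q"
  then have "finite {x. poly (p - q) x = 0}" by (intro poly_roots_finite) simp
  moreover have "of_nat ` {1..} \<subseteq> {x. poly (p - q) x = 0}" using assms by auto
  moreover have "infinite (of_nat ` {1::nat..} :: 'a set)"
    using finite_imageD[OF _ inj_on_subset[OF inj_of_nat]] infinite_Ici by blast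
  ultimately show False using finite_subset by blast
qed

lemma chrom_poly_eq:
  assumes "hypergraph V E"
  shows "chrom_poly V E = (\<Sum>S\<in>Pow E. monom ((-1) ^ card S) (card (hcomponents V S)))"
  unfolding chrom_poly_def
proof (rule the_equality)
  show "\<forall>n\<ge>1. poly (\<Sum>S\<in>Pow E. monom ((-1) ^ card S) (card (hcomponents V S))) (int n) =
      int (num_colourings V E n)"
    by (simp add: int_num_colourings_eq[OF assms] poly_sum poly_monom)
  then show "\<forall>n\<ge>1. poly p (int n) = int (num_colourings V E n) \<Longrightarrow>
      p = (\<Sum>S\<in>Pow E. monom ((-1) ^ card S) (card (hcomponents V S)))" for p
    by (intro poly_eqI_of_nat) simp
qed

lemma coeff_chrom_poly:
  assumes "hypergraph V E"
  shows "coeff (chrom_poly V E) k = (\<Sum>S | S \<subseteq> E \<and> card (hcomponents V S) = k. (-1) ^ card S)"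
  using hypergraph_finite_edges[OF assms]
  by (simp add: chrom_poly_eq[OF assms] coeff_sum coeff_monom sum.inter_filter[symmetric] Pow_def)

lemma coeff_0_chrom_poly:
  assumes "hypergraph V E" "V \<noteq> {}"
  shows "coeff (chrom_poly V E) 0 = 0"
proof -
  have "{S. S \<subseteq> E \<and> card (hcomponents V S) = 0} = {}"
    using assms card_hcomponents_pos[of V] by (auto simp: hypergraph_def)
  then show ?thesis
    by (simp only: coeff_chrom_poly[OF assms(1)] sum.empty)
qed

lemma rtrancl_hadj_covered:
  assumes "(u, w) \<in> (hadj S)\<^sup>*" "w \<in> \<Union>S"
  shows "u \<in> \<Union>S"
  using assms by (cases rule: converse_rtranclE) (auto simp: hadj_def)

lemma card_hcomponents_eq_1_iff_bridges_subset:
  assumes "hypergraph V E" "hconnected V (bridges V E)" "e0 \<in> E - bridges V E" "S \<subseteq> E"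
  shows "card (hcomponents V S) = 1 \<longleftrightarrow> bridges V E \<subseteq> S"
proof
  have "V \<noteq> {}" and "e0 \<subseteq> V" "e0 \<noteq> {}" using assms(1,3) by (auto simp: hypergraph_def)
  note linked_iff = card_hcomponents_eq_1_iff[OF \<open>V \<noteq> {}\<close>]
  have "\<forall>u\<in>V. \<forall>v\<in>V. (u, v) \<in> (hadj (bridges V E))\<^sup>*"
    using assms(2) by (simp add: hconnected_iff_rtrancl)
  moreover have "(hadj (bridges V E))\<^sup>* \<subseteq> (hadj S)\<^sup>*" if "bridges V E \<subseteq> S"
    using rtrancl_mono[OF hadj_mono[OF that]] .
  ultimately show "card (hcomponents V S) = 1" if "bridges V E \<subseteq> S"
    using that linked_iff by blast
  assume one: "card (hcomponents V S) = 1"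
  show "bridges V E \<subseteq> S"
  proof
    fix b assume b: "b \<in> bridges V E"
    show "b \<in> S"
    proof (rule ccontr)
      assume "b \<notin> S"
      then have "S \<subseteq> E - {b}" using assms(4) by blast
      then have "(hadj S)\<^sup>* \<subseteq> (hadj (E - {b}))\<^sup>*" by (intro rtrancl_mono hadj_mono)
      then have linked: "\<forall>u\<in>V. \<forall>v\<in>V. (u, v) \<in> (hadj (E - {b}))\<^sup>*"
        using one linked_iff by blast
      \<comment> \<open>Connectivity also requires every vertex to lie on an edge; the non-bridge e0
        survives the deletion of b, and every vertex is linked to it.\<close>
      obtain w where "w \<in> e0" using \<open>e0 \<noteq> {}\<close> by blast
      have "e0 \<in> E - {b}" using assms(3) b by blast
      then have "w \<in> V" "w \<in> \<Union>(E - {b})" using \<open>w \<in> e0\<close> \<open>e0 \<subseteq> V\<close> by auto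
      have "V \<subseteq> \<Union>(E - {b})"
      proof
        fix u assume "u \<in> V"
        then show "u \<in> \<Union>(E - {b})"
          using linked \<open>w \<in> V\<close> rtrancl_hadj_covered[OF _ \<open>w \<in> \<Union>(E - {b})\<close>] by blast
      qed
      then have "hconnected V (E - {b})" using linked by (simp add: hconnected_iff_rtrancl)
      then show False using b by (simp add: bridges_def)
    qed
  qed
qed

lemma coeff_1_chrom_poly:
  assumes "hypergraph V E" "hconnected V (bridges V E)" "bridges V E \<subset> E"
  shows "coeff (chrom_poly V E) 1 = 0"
proof -
  obtain e0 where e0: "e0 \<in> E - bridges V E" using assms(3) by blast
  have "finite E" using assms(1) by (rule hypergraph_finite_edges)
  have "{S. S \<subseteq> E \<and> card (hcomponents V S) = 1} = {S. S \<subseteq> E \<and> bridges V E \<subseteq> S}"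
    using card_hcomponents_eq_1_iff_bridges_subset[OF assms(1,2) e0] by blast
  then have "coeff (chrom_poly V E) 1 = (\<Sum>S | S \<subseteq> E \<and> bridges V E \<subseteq> S. (-1) ^ card S)"
    by (simp only: coeff_chrom_poly[OF assms(1)])
  also have "\<dots> = 0"
    using card_subsupersets_even_odd[OF \<open>finite E\<close> assms(3)] \<open>finite E\<close>
    by (intro sum_alternating_cancels) (simp_all add: conj_assoc)
  finally show ?thesis .
qed

theorem theorem3:
  fixes V :: "'a set" and E :: "'a set set"
  assumes "hypergraph V E"
    and "hconnected V E"
    and "bridges V E \<subset> E"
    and "hconnected V (bridges V E)"
  shows "[:0, 0, 1:] dvd chrom_poly V E"
proof -
  have "V \<noteq> {}"
    using assms(1,3) by (auto simp: hypergraph_def)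
  then have "monom 1 2 dvd chrom_poly V E"
    using coeff_0_chrom_poly[OF assms(1)] coeff_1_chrom_poly[OF assms(1,4,3)]
    by (simp add: monom_1_dvd_iff' less_2_cases_iff)
  moreover have "monom 1 2 = [:0, 0, 1 :: int:]" by (simp add: numeral_2_eq_2 monom_Suc)
  ultimately show ?thesis by simp
qed

end
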